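(* Let $\lambda>-1/2$ and $-1<s<1$. Then for $k=2,3,\ldots$, \[ \int_{-1}^{1} |x-s| (1-x^2)^{\lambda-\frac {1}{2}} C_k^{\lambda}(x)\, dx ~=~ \frac {8\lambda(\lambda+1)} {k(k-1)(k+2\lambda)(k+2\lambda+1)} (1-s^2)^{\lambda+\frac {3}{2}} C_{k-2}^{\lambda+2} (s). \]
   Context: The Gegenbauer polynomial $C_k^{\lambda}(x)$ of degree $k$ associated to $\lambda$ is the coefficient of $z^k$ in the expansion $(1-2xz+z^2)^{-\lambda}=\sum_{k=0}^\infty C_k^\lambda(x)z^k$ ($-1<x<1$, $|z|<1$); equivalently $C_k^{\lambda}(x)=\sum_{j=0}^{[k/2]}\frac{(-1)^j(\lambda)_{k-j}}{j!\,(k-2j)!}(2x)^{k-2j}$, where $(\lambda)_0=1$ and $(\lambda)_k=\lambda(\lambda+1)\cdots(\lambda+k-1)$. *)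

theory Defs
  imports "HOL-Analysis.Analysis"
begin

definition gegenbauer :: "nat \<Rightarrow> real \<Rightarrow> real \<Rightarrow> real" where
  "gegenbauer k lam x =
     (\<Sum>j = 0..k div 2. (-1) ^ j * pochhammer lam (k - j) / (fact j * fact (k - 2 * j))
                         * (2 * x) ^ (k - 2 * j))"

end

theory Submission
  imports Defs
begin

(*
  Write W(mu, m) for (1 - x^2) powr (mu - 1/2) * C_m^mu(x). Comparing coefficients of powers
  of 2x gives the lowering identity  2 mu W(mu + 1, m)' = -(m + 1)(m + 1 + 2 mu) W(mu, m + 1).
  Applied twice, the integrand's factor W(lam, k) is F'' for F a constant multiple of
  W(lam + 2, k - 2), and since lam > -1/2 both F and F' vanish at -1 and 1. Integrating by
  parts twice on [-1, s] and on [s, 1], where |x - s| is linear, gives the integral 2 F(s).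
*)

lemma sum_atMost_Suc_half:
  fixes f :: "nat \<Rightarrow> 'a::comm_monoid_add"
  assumes "odd m \<Longrightarrow> f (Suc m div 2) = 0"
  shows "(\<Sum>j\<le>Suc m div 2. f j) = (\<Sum>j\<le>m div 2. f j)"
proof (cases "even m")
  case False
  then have "Suc m div 2 = Suc (m div 2)" by presburger
  then show ?thesis using assms False by simp
qed simp

lemma sum_lessThan_Suc_half:
  fixes f :: "nat \<Rightarrow> 'a::comm_monoid_add"
  assumes "even m \<Longrightarrow> f (m div 2) = 0"
  shows "(\<Sum>j<Suc m div 2. f j) = (\<Sum>j\<le>m div 2. f j)"
proof (cases "even m")
  case True
  then have "{..m div 2} = insert (m div 2) {..<Suc m div 2}" by auto
  then show ?thesis using assms True by simp
next
  case False
  then have "Suc m div 2 = Suc (m div 2)" by presburger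
  then show ?thesis by (simp add: lessThan_Suc_atMost)
qed

definition gegenbauer_coeff :: "real \<Rightarrow> nat \<Rightarrow> nat \<Rightarrow> real" where
  "gegenbauer_coeff \<mu> j r = (-1) ^ j * pochhammer \<mu> (j + r) / (fact j * fact r)"

lemma gegenbauer_eq_coeff_sum:
  "gegenbauer n \<mu> x = (\<Sum>j\<le>n div 2. gegenbauer_coeff \<mu> j (n - 2*j) * (2*x) ^ (n - 2*j))"
  unfolding gegenbauer_def gegenbauer_coeff_def atLeast0AtMost[symmetric]
  by (intro sum.cong refl) auto

lemma gegenbauer_coeff_shift_degree:
  "\<mu> * gegenbauer_coeff (\<mu> + 1) j r = (real r + 1) * gegenbauer_coeff \<mu> j (Suc r)"
proof -
  have "\<mu> * gegenbauer_coeff (\<mu> + 1) j r = (-1) ^ j * (\<mu> * pochhammer (\<mu> + 1) (j + r)) / (fact j * fact r)"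
    unfolding gegenbauer_coeff_def by simp
  also have "\<dots> = (-1) ^ j * pochhammer \<mu> (j + Suc r) / (fact j * fact r)"
    by (simp add: pochhammer_rec)
  also have "\<dots> = (real r + 1) * gegenbauer_coeff \<mu> j (Suc r)"
    unfolding gegenbauer_coeff_def by (simp add: fact_reduce add_ac)
  finally show ?thesis .
qed

lemma gegenbauer_coeff_shift_index:
  "(real r + 1) * \<mu> * gegenbauer_coeff (\<mu> + 1) j (Suc r)
     = - (real j + 1) * (\<mu> + real j + real r + 1) * gegenbauer_coeff \<mu> (Suc j) r"
proof -
  have "(real r + 1) * \<mu> * gegenbauer_coeff (\<mu> + 1) j (Suc r)
      = (-1) ^ j * (\<mu> * pochhammer (\<mu> + 1) (Suc (j + r))) / (fact j * fact r)"
    unfolding gegenbauer_coeff_def by (simp add: fact_reduce add_ac)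
  also have "\<dots> = (\<mu> + real j + real r + 1) * ((-1) ^ j * pochhammer \<mu> (Suc (j + r)) / (fact j * fact r))"
    using pochhammer_rec[of \<mu> "Suc (j + r)"] pochhammer_rec'[of \<mu> "Suc (j + r)"]
    by (simp add: algebra_simps)
  also have "(-1) ^ j * pochhammer \<mu> (Suc (j + r)) / (fact j * fact r)
      = - ((real j + 1) * gegenbauer_coeff \<mu> (Suc j) r)"
    unfolding gegenbauer_coeff_def by (simp add: fact_reduce add_ac)
  finally show ?thesis by (simp add: algebra_simps)
qed

definition gegenbauer_deriv :: "nat \<Rightarrow> real \<Rightarrow> real \<Rightarrow> real" where
  "gegenbauer_deriv n \<mu> x =
     (\<Sum>j\<le>n div 2. gegenbauer_coeff \<mu> j (n - 2*j) * (2 * real (n - 2*j) * (2*x) ^ (n - 2*j - 1)))"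

lemma gegenbauer_has_real_derivative:
  "(gegenbauer n \<mu> has_real_derivative gegenbauer_deriv n \<mu> x) (at x)"
proof -
  have "((\<lambda>x. (2*x) ^ r) has_real_derivative 2 * real r * (2*x) ^ (r - 1)) (at x)" for r
    by (rule derivative_eq_intros refl | simp)+
  then show ?thesis
    unfolding gegenbauer_eq_coeff_sum[abs_def] gegenbauer_deriv_def
    by (intro DERIV_sum DERIV_cmult)
qed

lemma continuous_on_gegenbauer: "continuous_on S (gegenbauer n \<mu>)"
  by (rule continuous_at_imp_continuous_on) (auto intro: DERIV_isCont gegenbauer_has_real_derivative)

lemma sum_gegenbauer_coeff_shift_index:
  fixes \<mu> t :: real
  shows "(\<Sum>j\<le>Suc m div 2. 4 * real j * (\<mu> + real j + real (Suc m - 2*j))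
                               * gegenbauer_coeff \<mu> j (Suc m - 2*j) * t ^ (Suc m - 2*j))
       = - (\<Sum>j\<le>m div 2. 4*\<mu> * real (m - 2*j) * gegenbauer_coeff (\<mu> + 1) j (m - 2*j) * t ^ (m - 2*j - 1))"
    (is "(\<Sum>j\<le>_. ?U j) = - (\<Sum>j\<le>_. ?A j)")
proof -
  have "(\<Sum>j\<le>Suc m div 2. ?U j) = (\<Sum>j<Suc m div 2. ?U (Suc j))"
    unfolding lessThan_Suc_atMost[symmetric] sum.lessThan_Suc_shift by simp
  also have "\<dots> = - (\<Sum>j<Suc m div 2. ?A j)"
    unfolding sum_negf[symmetric]
  proof (intro sum.cong refl)
    fix j assume "j \<in> {..<Suc m div 2}"
    define r where "r = m - 2*j - 1"
    have r: "m - 2*j = Suc r" "Suc m - 2 * Suc j = r"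
      using \<open>j \<in> {..<Suc m div 2}\<close> unfolding r_def by auto
    have "?A j = 4 * t ^ r * ((real r + 1) * \<mu> * gegenbauer_coeff (\<mu> + 1) j (Suc r))"
      unfolding r by (simp add: algebra_simps)
    also have "\<dots> = - ?U (Suc j)"
      unfolding gegenbauer_coeff_shift_index r by (simp add: algebra_simps)
    finally show "?U (Suc j) = - ?A j" by simp
  qed
  also have "\<dots> = - (\<Sum>j\<le>m div 2. ?A j)"
    by (subst sum_lessThan_Suc_half) auto
  finally show ?thesis .
qed

lemma sum_gegenbauer_coeff_shift_degree:
  fixes \<mu> t :: real
  shows "(\<Sum>j\<le>Suc m div 2. real (Suc m - 2*j) * (real (Suc m - 2*j) + 2*\<mu>)
                               * gegenbauer_coeff \<mu> j (Suc m - 2*j) * t ^ (Suc m - 2*j))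
       = (\<Sum>j\<le>m div 2. \<mu> * (real (m - 2*j) + 2*\<mu> + 1) * gegenbauer_coeff (\<mu> + 1) j (m - 2*j) * t ^ (m - 2*j + 1))"
    (is "(\<Sum>j\<le>_. ?V j) = (\<Sum>j\<le>_. ?B j)")
proof -
  have "(\<Sum>j\<le>Suc m div 2. ?V j) = (\<Sum>j\<le>m div 2. ?V j)"
    by (rule sum_atMost_Suc_half) simp
  also have "\<dots> = (\<Sum>j\<le>m div 2. ?B j)"
  proof (intro sum.cong refl)
    fix j assume "j \<in> {..m div 2}"
    then have r: "Suc m - 2*j = Suc (m - 2*j)" by auto
    have "?B j = (real (m - 2*j) + 1 + 2*\<mu>) * t ^ Suc (m - 2*j) * (\<mu> * gegenbauer_coeff (\<mu> + 1) j (m - 2*j))"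
      by (simp add: algebra_simps)
    also have "\<dots> = ?V j"
      unfolding gegenbauer_coeff_shift_degree r by (simp add: algebra_simps)
    finally show "?V j = ?B j" by simp
  qed
  finally show ?thesis .
qed

lemma gegenbauer_lowering_identity:
  fixes \<mu> x :: real
  shows "2*\<mu> * ((1 - x^2) * gegenbauer_deriv m (\<mu> + 1) x - (2*\<mu> + 1) * x * gegenbauer m (\<mu> + 1) x)
           = - (real m + 1) * (real m + 1 + 2*\<mu>) * gegenbauer (Suc m) \<mu> x"
proof -
  define t where "t = 2*x"
  define A where "A j = 4*\<mu> * real (m - 2*j) * gegenbauer_coeff (\<mu> + 1) j (m - 2*j) * t ^ (m - 2*j - 1)"
    for j
  define B where "B j = \<mu> * (real (m - 2*j) + 2*\<mu> + 1) * gegenbauer_coeff (\<mu> + 1) j (m - 2*j) * t ^ (m - 2*j + 1)"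
    for j
  define U where "U j = 4 * real j * (\<mu> + real j + real (Suc m - 2*j))
                        * gegenbauer_coeff \<mu> j (Suc m - 2*j) * t ^ (Suc m - 2*j)" for j
  define V where "V j = real (Suc m - 2*j) * (real (Suc m - 2*j) + 2*\<mu>)
                        * gegenbauer_coeff \<mu> j (Suc m - 2*j) * t ^ (Suc m - 2*j)" for j
  have termwise: "2*\<mu> * ((1 - x^2) * (g * (2 * real r * t ^ (r - 1))) - (2*\<mu> + 1) * x * (g * t ^ r))
      = 4*\<mu> * real r * g * t ^ (r - 1) - \<mu> * (real r + 2*\<mu> + 1) * g * t ^ (r + 1)" for g r
    unfolding t_def by (cases r) (simp_all add: algebra_simps power2_eq_square)
  have "2*\<mu> * ((1 - x^2) * gegenbauer_deriv m (\<mu> + 1) x - (2*\<mu> + 1) * x * gegenbauer m (\<mu> + 1) x)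
      = (\<Sum>j\<le>m div 2. A j) - (\<Sum>j\<le>m div 2. B j)"
    unfolding gegenbauer_deriv_def gegenbauer_eq_coeff_sum sum_distrib_left sum_subtractf[symmetric]
    by (intro sum.cong refl) (simp only: A_def B_def t_def termwise[unfolded t_def])
  also have "\<dots> = - (\<Sum>j\<le>Suc m div 2. U j) - (\<Sum>j\<le>Suc m div 2. V j)"
    unfolding A_def B_def U_def V_def sum_gegenbauer_coeff_shift_index sum_gegenbauer_coeff_shift_degree
    by simp
  also have "\<dots> = - (real m + 1) * (real m + 1 + 2*\<mu>) * gegenbauer (Suc m) \<mu> x"
    \<comment> \<open>termwise, as \<open>(m+1)(m+1+2\<mu>) = 4j(\<mu>+j+\<rho>) + \<rho>(\<rho>+2\<mu>)\<close> for the exponent \<open>\<rho> = m+1-2j\<close>\<close>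
    unfolding gegenbauer_eq_coeff_sum sum_distrib_left sum_negf[symmetric] sum_subtractf[symmetric]
  proof (intro sum.cong refl)
    fix j assume "j \<in> {..Suc m div 2}"
    then have "real (Suc m - 2*j) = real m + 1 - 2 * real j" by auto
    then show "- U j - V j
        = - (real m + 1) * (real m + 1 + 2*\<mu>) * (gegenbauer_coeff \<mu> j (Suc m - 2*j) * (2*x) ^ (Suc m - 2*j))"
      unfolding U_def V_def t_def by (simp add: algebra_simps)
  qed
  finally show ?thesis .
qed

definition weighted_gegenbauer :: "real \<Rightarrow> nat \<Rightarrow> real \<Rightarrow> real" where
  "weighted_gegenbauer \<mu> m x = (1 - x^2) powr (\<mu> - 1/2) * gegenbauer m \<mu> x"

lemma weighted_gegenbauer_has_real_derivative:
  fixes \<mu> x :: real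
  assumes "-1 < x" "x < 1"
  shows "(weighted_gegenbauer (\<mu> + 1) m has_real_derivative
           (1 - x^2) powr (\<mu> - 1/2) * ((1 - x^2) * gegenbauer_deriv m (\<mu> + 1) x
                                          - (2*\<mu> + 1) * x * gegenbauer m (\<mu> + 1) x)) (at x)"
proof -
  have pos: "1 - x^2 > 0" using assms by (simp add: abs_square_less_1 abs_less_iff)
  have split: "(1 - x^2) powr (\<mu> + 1 - 1/2) = (1 - x^2) * (1 - x^2) powr (\<mu> - 1/2)"
    using powr_add[of "1 - x^2" 1 "\<mu> - 1/2"] pos by (simp add: add.commute)
  have "(weighted_gegenbauer (\<mu> + 1) m has_real_derivative
          (\<mu> + 1 - 1/2) * (1 - x^2) powr (\<mu> + 1 - 1/2 - 1) * (0 - 2 * x ^ 1 * 1) * gegenbauer m (\<mu> + 1) x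
          + (1 - x^2) powr (\<mu> + 1 - 1/2) * gegenbauer_deriv m (\<mu> + 1) x) (at x)"
    unfolding weighted_gegenbauer_def[abs_def]
    by (rule derivative_eq_intros refl gegenbauer_has_real_derivative pos | simp)+
  then show ?thesis
    unfolding split by (simp add: algebra_simps)
qed

(* Kept multiplied by 2 mu: at mu = 0 both sides vanish, although W(1, m) is not constant. *)
lemma weighted_gegenbauer_lowering:
  fixes \<mu> x :: real
  assumes "-1 < x" "x < 1"
  shows "((\<lambda>x. 2*\<mu> * weighted_gegenbauer (\<mu> + 1) m x) has_real_derivative
           - (real m + 1) * (real m + 1 + 2*\<mu>) * weighted_gegenbauer \<mu> (Suc m) x) (at x)"
  using DERIV_cmult[OF weighted_gegenbauer_has_real_derivative[OF assms], of "2*\<mu>" \<mu> m]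
  unfolding weighted_gegenbauer_def
  by (simp add: mult.left_commute[of "2*\<mu>"] gegenbauer_lowering_identity) (simp add: ac_simps)

lemma continuous_on_weighted_gegenbauer:
  assumes "\<mu> > 1/2"
  shows "continuous_on {-1..1} (weighted_gegenbauer \<mu> m)"
proof -
  have "0 \<le> 1 - x^2" if "x \<in> {-1..1}" for x :: real
    using that by (simp add: abs_square_le_1 abs_le_iff)
  then show ?thesis
    unfolding weighted_gegenbauer_def[abs_def] using assms
    by (intro continuous_intros continuous_on_gegenbauer continuous_on_powr') auto
qed

lemma has_integral_abs_diff_mult_second_derivative:
  fixes F G g :: "real \<Rightarrow> real"
  assumes s: "a \<le> s" "s \<le> b"
    and cont: "continuous_on {a..b} F" "continuous_on {a..b} G"
    and bdry: "F a = 0" "F b = 0" "G a = 0" "G b = 0"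
    and F': "\<And>x. a < x \<Longrightarrow> x < b \<Longrightarrow> (F has_real_derivative G x) (at x)"
    and G': "\<And>x. a < x \<Longrightarrow> x < b \<Longrightarrow> (G has_real_derivative g x) (at x)"
  shows "((\<lambda>x. \<bar>x - s\<bar> * g x) has_integral 2 * F s) {a..b}"
proof -
  have cont_sub: "continuous_on {c..d} F" "continuous_on {c..d} G" if "a \<le> c" "d \<le> b" for c d
    using cont that by (auto elim!: continuous_on_subset)
  define L where "L x = (s - x) * G x + F x" for x
  define R where "R x = (x - s) * G x - F x" for x
  have "((\<lambda>x. \<bar>x - s\<bar> * g x) has_integral L s - L a) {a..s}"
  proof (rule fundamental_theorem_of_calculus_interior)
    show "continuous_on {a..s} L"
      unfolding L_def using cont_sub[of a s] s by (intro continuous_intros) auto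
    fix x assume x: "x \<in> {a<..<s}"
    then have x': "a < x" "x < b" using s by auto
    have "(L has_real_derivative (0 - 1) * G x + (s - x) * g x + G x) (at x)"
      unfolding L_def by (rule derivative_eq_intros refl F' G' x' | simp)+
    then show "(L has_vector_derivative \<bar>x - s\<bar> * g x) (at x)"
      using x by (simp add: has_real_derivative_iff_has_vector_derivative[symmetric])
  qed (use s in simp)
  then have left: "((\<lambda>x. \<bar>x - s\<bar> * g x) has_integral F s) {a..s}"
    unfolding L_def using bdry by simp
  have "((\<lambda>x. \<bar>x - s\<bar> * g x) has_integral R b - R s) {s..b}"
  proof (rule fundamental_theorem_of_calculus_interior)
    show "continuous_on {s..b} R"
      unfolding R_def using cont_sub[of s b] s by (intro continuous_intros) auto
    fix x assume x: "x \<in> {s<..<b}"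
    then have x': "a < x" "x < b" using s by auto
    have "(R has_real_derivative (1 - 0) * G x + (x - s) * g x - G x) (at x)"
      unfolding R_def by (rule derivative_eq_intros refl F' G' x' | simp)+
    then show "(R has_vector_derivative \<bar>x - s\<bar> * g x) (at x)"
      using x by (simp add: has_real_derivative_iff_has_vector_derivative[symmetric])
  qed (use s in simp)
  then have right: "((\<lambda>x. \<bar>x - s\<bar> * g x) has_integral F s) {s..b}"
    unfolding R_def using bdry by simp
  show ?thesis
    using has_integral_combine[OF s left right] by simp
qed

lemma weighted_gegenbauer_lowering_twice:
  fixes \<mu> x :: real and n :: nat
  assumes "\<mu> > -1/2" "-1 < x" "x < 1"
  defines "K1 \<equiv> (real n + 1) * (real n + 3 + 2*\<mu>)" and "K2 \<equiv> (real n + 2) * (real n + 2 + 2*\<mu>)"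
  shows "((\<lambda>x. 4*\<mu>*(\<mu> + 1) / (K1*K2) * weighted_gegenbauer (\<mu> + 2) n x) has_real_derivative
           - 2*\<mu> / K2 * weighted_gegenbauer (\<mu> + 1) (Suc n) x) (at x)"
    and "((\<lambda>x. - 2*\<mu> / K2 * weighted_gegenbauer (\<mu> + 1) (Suc n) x) has_real_derivative
           weighted_gegenbauer \<mu> (Suc (Suc n)) x) (at x)"
proof -
  have "K1 > 0" "K2 > 0" unfolding K1_def K2_def using \<open>\<mu> > -1/2\<close> by simp_all
  have K1_eq: "- (real n + 1) * (real n + 1 + 2 * (\<mu> + 1)) = - K1"
    and K2_eq: "- (real (Suc n) + 1) * (real (Suc n) + 1 + 2 * \<mu>) = - K2"
    unfolding K1_def K2_def by (simp_all add: algebra_simps)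
  note lowering = weighted_gegenbauer_lowering[OF \<open>-1 < x\<close> \<open>x < 1\<close>]
  have "((\<lambda>x. 2*\<mu> / (K1*K2) * (2 * (\<mu> + 1) * weighted_gegenbauer (\<mu> + 1 + 1) n x)) has_real_derivative
          2*\<mu> / (K1*K2) * (- K1 * weighted_gegenbauer (\<mu> + 1) (Suc n) x)) (at x)"
    by (intro DERIV_cmult lowering[of "\<mu> + 1" n, unfolded K1_eq])
  then show "((\<lambda>x. 4*\<mu>*(\<mu> + 1) / (K1*K2) * weighted_gegenbauer (\<mu> + 2) n x) has_real_derivative
           - 2*\<mu> / K2 * weighted_gegenbauer (\<mu> + 1) (Suc n) x) (at x)"
    using \<open>K1 > 0\<close> by (simp add: mult_ac add_ac)
  have "((\<lambda>x. - 1 / K2 * (2*\<mu> * weighted_gegenbauer (\<mu> + 1) (Suc n) x)) has_real_derivative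
          - 1 / K2 * (- K2 * weighted_gegenbauer \<mu> (Suc (Suc n)) x)) (at x)"
    by (intro DERIV_cmult lowering[of \<mu> "Suc n", unfolded K2_eq])
  then show "((\<lambda>x. - 2*\<mu> / K2 * weighted_gegenbauer (\<mu> + 1) (Suc n) x) has_real_derivative
           weighted_gegenbauer \<mu> (Suc (Suc n)) x) (at x)"
    using \<open>K2 > 0\<close> by simp
qed

theorem lemma2p3:
  fixes lam s :: real and k :: nat
  assumes "lam > -1/2" and "-1 < s" and "s < 1" and "k \<ge> 2"
  shows "((\<lambda>x. \<bar>x - s\<bar> * (1 - x^2) powr (lam - 1/2) * gegenbauer k lam x) has_integral
           (8 * lam * (lam + 1) / (real k * (real k - 1) * (real k + 2 * lam) * (real k + 2 * lam + 1))
            * (1 - s^2) powr (lam + 3/2) * gegenbauer (k - 2) (lam + 2) s)) {-1..1}"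
proof -
  obtain n where k: "k = Suc (Suc n)" using \<open>k \<ge> 2\<close> by (metis add_2_eq_Suc le_Suc_ex)
  define K1 where "K1 = (real n + 1) * (real n + 3 + 2*lam)"
  define K2 where "K2 = (real n + 2) * (real n + 2 + 2*lam)"
  define F where "F x = 4*lam*(lam + 1) / (K1*K2) * weighted_gegenbauer (lam + 2) n x" for x
  define G where "G x = - 2*lam / K2 * weighted_gegenbauer (lam + 1) (Suc n) x" for x
  have F': "(F has_real_derivative G x) (at x)" and G': "(G has_real_derivative weighted_gegenbauer lam k x) (at x)"
    if "-1 < x" "x < 1" for x
    unfolding F_def[abs_def] G_def[abs_def] K1_def K2_def k
    using weighted_gegenbauer_lowering_twice[OF \<open>lam > -1/2\<close> that] by auto
  have cont: "continuous_on {-1..1} F" "continuous_on {-1..1} G"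
    unfolding F_def[abs_def] G_def[abs_def] using \<open>lam > -1/2\<close>
    by (intro continuous_intros continuous_on_weighted_gegenbauer; simp)+
  have bdry: "F (-1) = 0" "F 1 = 0" "G (-1) = 0" "G 1 = 0"
    by (simp_all add: F_def G_def weighted_gegenbauer_def)
  have "((\<lambda>x. \<bar>x - s\<bar> * weighted_gegenbauer lam k x) has_integral 2 * F s) {-1..1}"
    using \<open>-1 < s\<close> \<open>s < 1\<close>
    by (intro has_integral_abs_diff_mult_second_derivative[OF _ _ cont bdry F' G']) auto
  moreover have "2 * F s = 8 * lam * (lam + 1) / (real k * (real k - 1) * (real k + 2 * lam) * (real k + 2 * lam + 1))
            * (1 - s^2) powr (lam + 3/2) * gegenbauer (k - 2) (lam + 2) s"
    unfolding F_def K1_def K2_def weighted_gegenbauer_def k by (simp add: field_simps)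
  ultimately show ?thesis
    unfolding weighted_gegenbauer_def by (simp add: mult.assoc)
qed

end
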